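(* Let $k,n\in\mathbb{N}$ with $2n\ge k$. For $i\in\mathbb{N}$ put $x_i=\frac{1+(-1)^{i}}{2}\cdot\frac{[(i-1)!!]^2}{i+1}$ (so $(x_1,x_2,x_3,x_4,x_5,x_6,\dots)=(0,\tfrac13,0,\tfrac95,0,\tfrac{225}{7},\dots)$). Then \[ \mathrm{B}_{2n,k}\bigl(x_1,x_2,\dots,x_{2n-k+1}\bigr)=(-1)^{n+k}\frac{(4n)!!}{(2n+k)!}\sum_{q=1}^{k}(-1)^{q}\binom{2n+k}{k-q}\,Q(q,2n;2). \]
   Context: Partial Bell polynomials: for $n\ge k\ge0$, \[ \mathrm{B}_{n,k}(x_1,\dots,x_{n-k+1})=\sum\frac{n!}{\prod_{i=1}^{n-k+1}\ell_i!}\prod_{i=1}^{n-k+1}\left(\frac{x_i}{i!}\right)^{\ell_i}, \] the sum over all $(\ell_1,\dots,\ell_{n-k+1})\in\mathbb{N}_0^{n-k+1}$ with $\sum_i i\ell_i=n$ and $\sum_i\ell_i=k$. Double factorials: $(2p)!!=2^p p!$, $(2p-1)!!=1\cdot3\cdots(2p-1)$, $0!!=(-1)!!=1$. $s(n,k)$ denotes the signed Stirling numbers of the first kind, defined by $\frac{[\ln(1+x)]^k}{k!}=\sum_{n=k}^\infty s(n,k)\frac{x^n}{n!}$ for $|x|<1$; equivalently $\prod_{j=0}^{n-1}(z-j)=\sum_{k=0}^n s(n,k)z^k$. For $m\in\mathbb{N}$, $k\in\mathbb{N}_0$ and $\alpha\in\mathbb{R}$ define \[ Q(m,k;\alpha)=\sum_{\ell=0}^{k}\binom{m+\ell-1}{m-1}\,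 s(m+k-1,m+\ell-1)\left(\frac{m+k-\alpha}{2}\right)^{\ell}, \] with the convention $0^0=1$. *)

theory Defs
  imports "HOL-Analysis.Analysis" "HOL-Combinatorics.Stirling"
begin

fun dfact :: "nat \<Rightarrow> nat" where
  "dfact 0 = 1"
| "dfact (Suc 0) = 1"
| "dfact (Suc (Suc n)) = Suc (Suc n) * dfact n"

definition stirling_s :: "nat \<Rightarrow> nat \<Rightarrow> int" where
  "stirling_s n k = (-1) ^ (n - k) * int (stirling n k)"

text \<open>Partial Bell polynomial B_{n,k}(x_1,...,x_{n-k+1}); the multi-indices
  (l_1,...,l_{n-k+1}) range over natural numbers (necessarily at most n).\<close>
definition bell_partial :: "nat \<Rightarrow> nat \<Rightarrow> (nat \<Rightarrow> real) \<Rightarrow> real" where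
  "bell_partial n k x =
     (\<Sum>l \<in> {l \<in> PiE {1..n-k+1} (\<lambda>_. {..n}).
               (\<Sum>i=1..n-k+1. i * l i) = n \<and> (\<Sum>i=1..n-k+1. l i) = k}.
        fact n / (\<Prod>i=1..n-k+1. fact (l i))
        * (\<Prod>i=1..n-k+1. (x i / fact i) ^ (l i)))"

definition Qfun :: "nat \<Rightarrow> nat \<Rightarrow> real \<Rightarrow> real" where
  "Qfun m k \<alpha> =
     (\<Sum>l=0..k. real ((m + l - 1) choose (m - 1))
        * real_of_int (stirling_s (m + k - 1) (m + l - 1))
        * ((real (m + k) - \<alpha>) / 2) ^ l)"

end

theory Submission
  imports Defs "HOL-Computational_Algebra.Polynomial" "HOL-Computational_Algebra.Formal_Power_Series"
begin

(* The exponential generating function of the partial Bell polynomials is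
   sum_N B_(N,k)(x) t^N / N! = (sum_i x_i t^i / i!)^k / k!, and for the given x_i the inner series
   is arcsin t / t - 1.  Hence B_(2n,k) = (2n)!/k! [t^(2n+k)] (arcsin t - t)^k, which the binomial
   theorem reduces to the coefficients [t^(2n+q)] arcsin^q t.  Since (1 - t^2) arcsin'' = t arcsin'
   and (1 - t^2) arcsin'^2 = 1, the powers of arcsin satisfy a second order differential equation,
   i.e. a two-term recursion for their coefficients.  Up to the factor (-4)^n, the coefficients of
   the polynomials prod_(j<M) (y + (M-1)/2 - j) obey the same recursion and initial values, and
   expanding these polynomials with Stirling numbers of the first kind yields Q(q, 2n; 2). *)

unbundle no vec_syntax
unbundle fps_syntax

section \<open>Partial Bell polynomials as coefficients of powers\<close>

definition weak_compositions :: "'a set \<Rightarrow> nat \<Rightarrow> ('a \<Rightarrow> nat) set" where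
  "weak_compositions I k = {l \<in> PiE I (\<lambda>_. {..k}). sum l I = k}"

lemma finite_weak_compositions: "finite I \<Longrightarrow> finite (weak_compositions I k)"
  unfolding weak_compositions_def
  by (rule finite_subset[of _ "PiE I (\<lambda>_. {..k})"]) (auto intro: finite_PiE)

lemma bij_betw_weak_compositions_insert:
  assumes "finite I" "m \<notin> I"
  shows "bij_betw (\<lambda>(p, l). l(m := p)) (SIGMA p:{..k}. weak_compositions I (k - p))
           (weak_compositions (insert m I) k)"
proof (rule bij_betw_byWitness[where f' = "\<lambda>l. (l m, l(m := undefined))"])
  have sum_upd: "(\<Sum>i\<in>I. if i = m then p else l i) = sum l I" for l :: "'a \<Rightarrow> nat" and p
    using assms by (intro sum.cong) auto
  show "\<forall>b\<in>(SIGMA p:{..k}. weak_compositions I (k - p)).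
          (\<lambda>l. (l m, l(m := undefined))) ((\<lambda>(p, l). l(m := p)) b) = b"
    using assms by (auto simp: weak_compositions_def PiE_def extensional_def fun_upd_idem)
  show "\<forall>l\<in>weak_compositions (insert m I) k. (\<lambda>(p, l). l(m := p)) (l m, l(m := undefined)) = l"
    by simp
  show "(\<lambda>(p, l). l(m := p)) ` (SIGMA p:{..k}. weak_compositions I (k - p))
          \<subseteq> weak_compositions (insert m I) k"
    using assms by (force simp: weak_compositions_def sum_upd PiE_def Pi_def extensional_def)
  have "l i \<le> sum l I" if "i \<in> I" for l :: "'a \<Rightarrow> nat" and i
    using that assms(1) by (intro member_le_sum) auto
  then show "(\<lambda>l. (l m, l(m := undefined))) ` weak_compositions (insert m I) k
               \<subseteq> (SIGMA p:{..k}. weak_compositions I (k - p))"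
    using assms by (auto simp: weak_compositions_def sum_upd PiE_def Pi_def extensional_def)
qed

definition multinomial_coeff :: "'a set \<Rightarrow> ('a \<Rightarrow> nat) \<Rightarrow> nat" where
  "multinomial_coeff I l = fact (sum l I) div (\<Prod>i\<in>I. fact (l i))"

lemma prod_fact_dvd_fact_sum:
  "finite I \<Longrightarrow> (\<Prod>i\<in>I. fact (l i)) dvd (fact (sum l I) :: nat)"
proof (induction I rule: finite_induct)
  case (insert m I)
  then have "(\<Prod>i\<in>insert m I. fact (l i)) dvd fact (l m) * (fact (sum l I) :: nat)"
    by simp
  also have "\<dots> dvd fact (sum l (insert m I))"
    using insert.hyps by (simp add: fact_fact_dvd_fact)
  finally show ?case .
qed simp

lemma multinomial_coeff_insert:
  assumes "finite I" "m \<notin> I"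
  shows "multinomial_coeff (insert m I) l = (sum l (insert m I) choose l m) * multinomial_coeff I l"
proof -
  obtain r :: nat where r: "fact (sum l I) = (\<Prod>i\<in>I. fact (l i)) * r"
    using prod_fact_dvd_fact_sum[OF assms(1), of l] unfolding dvd_def by blast
  have "fact (sum l (insert m I)) = (sum l (insert m I) choose l m) * fact (l m) * fact (sum l I)"
    using binomial_fact_lemma[of "l m" "l m + sum l I"] assms by (simp add: algebra_simps)
  then show ?thesis
    using assms by (simp add: multinomial_coeff_def r)
qed

lemma sum_power_multinomial:
  fixes a :: "'b \<Rightarrow> 'a :: comm_semiring_1"
  assumes "finite I"
  shows "(\<Sum>i\<in>I. a i) ^ k =
           (\<Sum>l\<in>weak_compositions I k. of_nat (multinomial_coeff I l) * (\<Prod>i\<in>I. a i ^ l i))"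
  using assms
proof (induction I arbitrary: k rule: finite_induct)
  case empty
  then show ?case
    by (cases k) (auto simp: weak_compositions_def multinomial_coeff_def)
next
  case (insert m I)
  define G where "G l = of_nat (multinomial_coeff (insert m I) l) * (\<Prod>i\<in>insert m I. a i ^ l i)" for l
  have "(\<Sum>i\<in>insert m I. a i) ^ k = (\<Sum>p\<le>k. of_nat (k choose p) * a m ^ p * (\<Sum>i\<in>I. a i) ^ (k - p))"
    using insert.hyps by (simp add: binomial_ring add.commute)
  also have "\<dots> = (\<Sum>(p, l)\<in>(SIGMA p:{..k}. weak_compositions I (k - p)).
                    of_nat (k choose p) * a m ^ p * (of_nat (multinomial_coeff I l) * (\<Prod>i\<in>I. a i ^ l i)))"
    unfolding insert.IH sum_distrib_left
    by (subst sum.Sigma) (auto simp: finite_weak_compositions insert.hyps)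
  also have "\<dots> = (\<Sum>(p, l)\<in>(SIGMA p:{..k}. weak_compositions I (k - p)). G (l(m := p)))"
  proof -
    have "i \<noteq> m" if "i \<in> I" for i
      using that insert.hyps by auto
    then have upd: "(\<Sum>i\<in>I. (l(m := p)) i) = sum l I"
        "(\<Prod>i\<in>I. fact ((l(m := p)) i) :: nat) = (\<Prod>i\<in>I. fact (l i))"
        "(\<Prod>i\<in>I. a i ^ (l(m := p)) i) = (\<Prod>i\<in>I. a i ^ l i)" for l :: "'b \<Rightarrow> nat" and p
      by (auto intro!: sum.cong prod.cong)
    have "multinomial_coeff (insert m I) (l(m := p)) = (k choose p) * multinomial_coeff I l"
      if "p \<le> k" "l \<in> weak_compositions I (k - p)" for p l
      using multinomial_coeff_insert[OF insert.hyps, of "l(m := p)"] insert.hyps that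
      by (simp add: upd multinomial_coeff_def weak_compositions_def fun_upd_same del: fun_upd_apply)
    then have "G (l(m := p)) = of_nat (k choose p) * a m ^ p * (of_nat (multinomial_coeff I l) * (\<Prod>i\<in>I. a i ^ l i))"
      if "p \<le> k" "l \<in> weak_compositions I (k - p)" for p l
      using insert.hyps that by (simp add: G_def upd mult_ac fun_upd_same del: fun_upd_apply)
    then show ?thesis by (intro sum.cong) auto
  qed
  also have "\<dots> = sum G (weak_compositions (insert m I) k)"
    using sum.reindex_bij_betw[OF bij_betw_weak_compositions_insert[OF insert.hyps], of G]
    by (simp add: split_def)
  finally show ?case
    by (simp add: G_def)
qed

lemma fps_power_nth_eq_if_prefix_eq:
  fixes f g :: "'a :: comm_semiring_1 fps"
  assumes "f $ 0 = 0" "g $ 0 = 0" "\<And>i. i \<le> m \<Longrightarrow> f $ i = g $ i" "j \<le> m + k - 1"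
  shows "(f ^ k) $ j = (g ^ k) $ j"
  using assms(4)
proof (induction k arbitrary: j)
  case (Suc k)
  have "f $ i * (f ^ k) $ (j - i) = g $ i * (g ^ k) $ (j - i)" if "i \<le> j" for i
  proof (cases "i = 0 \<or> m < i")
    case True
    then have "i = 0 \<or> j - i < k" using Suc.prems that by auto
    then show ?thesis
      using assms(1,2) startsby_zero_power_prefix[OF assms(1)] startsby_zero_power_prefix[OF assms(2)]
      by auto
  next
    case False
    then show ?thesis
      using Suc.IH[of "j - i"] Suc.prems assms(3)[of i] by auto
  qed
  then show ?case
    by (simp add: fps_mult_nth)
qed simp

lemma prod_fps_monom_power:
  fixes c :: "'b \<Rightarrow> 'a :: comm_semiring_1" and e l :: "'b \<Rightarrow> nat"
  shows "(\<Prod>i\<in>I. (fps_const (c i) * fps_X ^ e i) ^ l i)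
           = fps_const (\<Prod>i\<in>I. c i ^ l i) * fps_X ^ (\<Sum>i\<in>I. e i * l i)"
proof (induction I rule: infinite_finite_induct)
  case (insert m I)
  have "(fps_const (c m) * fps_X ^ e m) ^ l m = fps_const (c m ^ l m) * fps_X ^ (e m * l m)"
    by (simp add: power_mult_distrib power_mult fps_const_power)
  with insert show ?case
    by (simp add: power_add mult_ac flip: fps_const_mult del: fps_const_mult)
qed simp_all

lemma bell_partial_eq_fps_power_nth:
  fixes x :: "nat \<Rightarrow> real"
  assumes "k \<le> N"
  shows "bell_partial N k x = fact N / fact k * (Abs_fps (\<lambda>i. if i = 0 then 0 else x i / fact i) ^ k) $ N"
proof -
  define I where "I = {1..N - k + 1}"
  (* Only x_1, ..., x_(N-k+1) contribute to the coefficient of t^N in the k-th power. *)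
  define T where "T = (\<Sum>i\<in>I. fps_const (x i / fact i) * fps_X ^ i)"
  have fin: "finite I" by (simp add: I_def)
  have T_nth: "T $ j = (if j \<in> I then x j / fact j else 0)" for j
  proof -
    have "T $ j = (\<Sum>i\<in>I. if j = i then x i / fact i else 0)"
      unfolding T_def fps_sum_nth by (intro sum.cong) (auto simp: fps_X_power_nth)
    with fin show ?thesis by simp
  qed
  have "(Abs_fps (\<lambda>i. if i = 0 then 0 else x i / fact i) ^ k) $ N = (T ^ k) $ N"
    by (rule fps_power_nth_eq_if_prefix_eq[where m = "N - k + 1"])
       (use assms in \<open>auto simp: T_nth I_def\<close>)
  also have "\<dots> = (\<Sum>l\<in>weak_compositions I k. if (\<Sum>i\<in>I. i * l i) = N
                    then real (multinomial_coeff I l) * (\<Prod>i\<in>I. (x i / fact i) ^ l i) else 0)"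
    unfolding T_def sum_power_multinomial[OF fin] prod_fps_monom_power
    by (auto simp: fps_sum_nth fps_of_nat[symmetric] fps_X_power_nth mult.assoc[symmetric]
             intro!: sum.cong)
  also have "\<dots> = (\<Sum>l\<in>{l\<in>weak_compositions I k. (\<Sum>i\<in>I. i * l i) = N}.
                    real (multinomial_coeff I l) * (\<Prod>i\<in>I. (x i / fact i) ^ l i))"
    by (rule sum.inter_filter[symmetric]) (rule finite_weak_compositions[OF fin])
  also have "{l\<in>weak_compositions I k. (\<Sum>i\<in>I. i * l i) = N}
           = {l \<in> PiE I (\<lambda>_. {..N}). (\<Sum>i\<in>I. i * l i) = N \<and> (\<Sum>i\<in>I. l i) = k}"
  proof -
    have "l i \<le> sum l I" if "i \<in> I" for l :: "nat \<Rightarrow> nat" and i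
      using that fin by (intro member_le_sum) auto
    then show ?thesis
      using assms by (auto simp: weak_compositions_def PiE_def Pi_def intro: order.trans)
  qed
  finally have power_nth: "(Abs_fps (\<lambda>i. if i = 0 then 0 else x i / fact i) ^ k) $ N
      = (\<Sum>l \<in> {l \<in> PiE I (\<lambda>_. {..N}). (\<Sum>i\<in>I. i * l i) = N \<and> (\<Sum>i\<in>I. l i) = k}.
           real (multinomial_coeff I l) * (\<Prod>i\<in>I. (x i / fact i) ^ l i))" .
  show ?thesis
    unfolding bell_partial_def I_def[symmetric] power_nth sum_distrib_left
    by (intro sum.cong refl)
       (auto simp: multinomial_coeff_def real_of_nat_div prod_fact_dvd_fact_sum[OF fin] field_simps)
qed

section \<open>A symmetric falling factorial\<close>

lemma dfact_odd: "dfact (2 * n + 1) = (2 * n + 1) * dfact (2 * n - 1)"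
  by (cases n) simp_all

lemma dfact_even: "dfact (2 * n) = 2 ^ n * fact n"
  by (induction n) (simp_all add: algebra_simps)

(* The falling factorial of y + (M-1)/2 of length M (see poly_sym_falling_poly): its roots
   +-(M-1)/2, +-(M-3)/2, ... are symmetric about 0, and pairing them gives the recursion. *)
fun sym_falling_poly :: "nat \<Rightarrow> real poly" where
  "sym_falling_poly 0 = 1"
| "sym_falling_poly (Suc 0) = [:0, 1:]"
| "sym_falling_poly (Suc (Suc M)) = sym_falling_poly M * [:-((real M + 1)^2 / 4), 0, 1:]"

lemma coeff_mult_monic_quadratic:
  fixes p :: "'a :: comm_semiring_1 poly"
  shows "coeff (p * [:a, 0, 1:]) i = a * coeff p i + (if i \<ge> 2 then coeff p (i - 2) else 0)"
proof -
  have mult_eq: "p * [:a, 0, 1:] = smult a p + pCons 0 (pCons 0 p)"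
    by (simp add: mult_pCons_right)
  consider "i = 0" | "i = 1" | j where "i = Suc (Suc j)"
    by (metis not0_implies_Suc One_nat_def)
  then show ?thesis
    by cases (simp_all add: mult_eq)
qed

lemma coeff_sym_falling_poly_Suc_Suc:
  "coeff (sym_falling_poly (Suc (Suc M))) i =
     (if i \<ge> 2 then coeff (sym_falling_poly M) (i - 2) else 0)
     - (real M + 1)^2 / 4 * coeff (sym_falling_poly M) i"
  unfolding sym_falling_poly.simps(3) coeff_mult_monic_quadratic by simp

lemma coeff_sym_falling_poly_above: "M < i \<Longrightarrow> coeff (sym_falling_poly M) i = 0"
proof (induction M arbitrary: i rule: sym_falling_poly.induct)
  case 2
  then show ?case by (cases i) (auto simp: coeff_pCons split: nat.split)
qed (auto simp: coeff_sym_falling_poly_Suc_Suc simp del: sym_falling_poly.simps(3))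

lemma coeff_sym_falling_poly_top: "coeff (sym_falling_poly M) M = 1"
  by (induction M rule: sym_falling_poly.induct)
     (simp_all add: coeff_sym_falling_poly_Suc_Suc coeff_sym_falling_poly_above
               del: sym_falling_poly.simps(3))

lemma poly_sym_falling_poly:
  "poly (sym_falling_poly M) y = (\<Prod>j<M. y + (real M - 1) / 2 - real j)"
proof (induction M rule: sym_falling_poly.induct)
  case (3 M)
  let ?f = "\<lambda>j. y + (real (Suc (Suc M)) - 1) / 2 - real j"
  have "(\<Prod>j<Suc (Suc M). ?f j) = ?f 0 * ((\<Prod>j<M. ?f (Suc j)) * ?f (Suc M))"
    by (simp only: prod.lessThan_Suc_shift[of _ "Suc M"] prod.lessThan_Suc[of _ M])
  also have "(\<Prod>j<M. ?f (Suc j)) = poly (sym_falling_poly M) y"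
    unfolding "3" by (intro prod.cong) (simp_all add: field_simps)
  also have "?f 0 * (poly (sym_falling_poly M) y * ?f (Suc M)) = poly (sym_falling_poly (Suc (Suc M))) y"
    by (simp add: field_simps power2_eq_square)
  finally show ?case ..
qed simp_all

lemma prod_diff_of_nat_eq_stirling:
  fixes w :: "'a :: comm_ring_1"
  shows "(\<Prod>j<M. w - of_nat j) = (\<Sum>k\<le>M. of_int (stirling_s M k) * w ^ k)"
proof -
  have "(\<Prod>j<M. w - of_nat j) = (-1)^M * pochhammer (-w) M"
    by (induction M) (simp_all add: pochhammer_Suc algebra_simps)
  also have "\<dots> = (-1)^M * (\<Sum>k\<le>M. of_nat (stirling M k) * (-w) ^ k)"
    by (simp add: stirling_pochhammer)
  also have "\<dots> = (\<Sum>k\<le>M. of_int (stirling_s M k) * w ^ k)"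
    unfolding sum_distrib_left
  proof (rule sum.cong)
    fix k assume "k \<in> {..M}"
    then have "(-1 :: 'a)^M = (-1)^(M - k) * (-1)^k"
      by (simp flip: power_add)
    then show "(-1)^M * (of_nat (stirling M k) * (-w) ^ k) = of_int (stirling_s M k) * w ^ k"
      by (simp add: stirling_s_def power_minus' algebra_simps)
  qed simp
  finally show ?thesis .
qed

lemma coeff_sym_falling_poly:
  assumes "i \<le> M"
  shows "coeff (sym_falling_poly M) i =
           (\<Sum>k\<le>M. of_int (stirling_s M k) * real (k choose i) * ((real M - 1) / 2) ^ (k - i))"
proof -
  define c where "c = (real M - 1) / 2"
  define p where "p = (\<Sum>i\<le>M. monom (\<Sum>k\<le>M. of_int (stirling_s M k) * real (k choose i) * c ^ (k - i)) i)"
  have "poly (sym_falling_poly M) y = poly p y" for y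
  proof -
    have "poly (sym_falling_poly M) y = (\<Prod>j<M. (y + c) - real j)"
      by (simp add: poly_sym_falling_poly c_def algebra_simps)
    also have "\<dots> = (\<Sum>k\<le>M. of_int (stirling_s M k) * (\<Sum>i\<le>M. real (k choose i) * y ^ i * c ^ (k - i)))"
      unfolding prod_diff_of_nat_eq_stirling
    proof (intro sum.cong refl)
      fix k assume "k \<in> {..M}"
      then have "(y + c) ^ k = (\<Sum>i\<le>M. real (k choose i) * y ^ i * c ^ (k - i))"
        unfolding binomial_ring by (intro sum.mono_neutral_left) auto
      then show "of_int (stirling_s M k) * (y + c) ^ k
                   = of_int (stirling_s M k) * (\<Sum>i\<le>M. real (k choose i) * y ^ i * c ^ (k - i))"
        by simp
    qed
    also have "\<dots> = poly p y"
      unfolding p_def poly_sum poly_monom sum_distrib_left sum_distrib_right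
      by (subst sum.swap) (simp add: algebra_simps)
    finally show ?thesis .
  qed
  then have "sym_falling_poly M = p"
    by (intro poly_eq_poly_eq_iff[THEN iffD1] ext)
  with assms show ?thesis
    by (simp add: p_def c_def coeff_sum coeff_monom)
qed

lemma Qfun_eq_coeff_sym_falling_poly:
  assumes "q \<ge> 1"
  shows "Qfun q (2 * n) 2 = coeff (sym_falling_poly (q + 2 * n - 1)) (q - 1)"
proof -
  define M where "M = q + 2 * n - 1"
  define f where "f k = of_int (stirling_s M k) * real (k choose (q - 1)) * ((real M - 1) / 2) ^ (k - (q - 1))" for k
  have "coeff (sym_falling_poly M) (q - 1) = (\<Sum>k\<le>M. f k)"
    using assms by (simp add: coeff_sym_falling_poly f_def M_def)
  also have "\<dots> = (\<Sum>k\<in>{q - 1..M}. f k)"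
    by (intro sum.mono_neutral_right) (auto simp: f_def)
  also have "\<dots> = (\<Sum>l=0..2 * n. f (l + (q - 1)))"
  proof -
    have "{q - 1..M} = {0 + (q - 1)..2 * n + (q - 1)}"
      using assms by (auto simp: M_def)
    then show ?thesis
      by (simp only: sum.shift_bounds_cl_nat_ivl)
  qed
  also have "\<dots> = Qfun q (2 * n) 2"
    using assms unfolding Qfun_def f_def M_def
    by (intro sum.cong refl) (simp add: of_nat_diff algebra_simps)
  finally show ?thesis
    by (simp add: M_def)
qed

lemma sym_falling_poly_even_coeff_0:
  "(-4)^n * coeff (sym_falling_poly (2 * n)) 0 = (real (dfact (2 * n - 1)))^2"
proof (induction n)
  case (Suc n)
  have "real (dfact (2 * Suc n - 1)) = (2 * real n + 1) * real (dfact (2 * n - 1))"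
    using dfact_odd[of n] by (simp add: algebra_simps)
  moreover have "coeff (sym_falling_poly (2 * Suc n)) 0
      = -((2 * real n + 1)^2 / 4) * coeff (sym_falling_poly (2 * n)) 0"
    using coeff_sym_falling_poly_Suc_Suc[of "2 * n" 0] by simp
  ultimately show ?case
    using Suc by (simp add: power_mult_distrib)
qed simp

section \<open>Powers of the arcsine series\<close>

definition arcsin_coeff :: "nat \<Rightarrow> real" where
  "arcsin_coeff j = (if odd j then (real (dfact (j - 2)))^2 else 0)"

definition arcsin_fps :: "real fps" where
  "arcsin_fps = Abs_fps (\<lambda>j. arcsin_coeff j / fact j)"

lemma arcsin_coeff_Suc_Suc_Suc: "arcsin_coeff (j + 3) = (real j + 1)^2 * arcsin_coeff (j + 1)"
proof (cases "even j")
  case True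
  then obtain p where "j = 2 * p" by blast
  then have "real (dfact (j + 1)) = (real j + 1) * real (dfact (j - 1))"
    using dfact_odd[of p] by (simp add: algebra_simps)
  then show ?thesis
    using True by (simp add: arcsin_coeff_def power_mult_distrib)
qed (simp add: arcsin_coeff_def)

lemma fps_deriv_arcsin_fps_nth: "fps_deriv arcsin_fps $ j = arcsin_coeff (j + 1) / fact j"
  by (simp add: arcsin_fps_def fact_Suc del: of_nat_Suc)

lemma arcsin_fps_deriv_ode:
  "(1 - fps_X^2) * fps_deriv (fps_deriv arcsin_fps) = fps_X * fps_deriv arcsin_fps"
proof (rule fps_ext)
  fix j
  have second: "fps_deriv (fps_deriv arcsin_fps) $ i = arcsin_coeff (i + 2) / fact i" for i
    by (subst fps_deriv_nth) (simp add: fps_deriv_arcsin_fps_nth fact_Suc del: of_nat_Suc fps_deriv_nth)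
  have lhs: "((1 - fps_X^2) * fps_deriv (fps_deriv arcsin_fps)) $ j
      = fps_deriv (fps_deriv arcsin_fps) $ j
        - (if j < 2 then 0 else fps_deriv (fps_deriv arcsin_fps) $ (j - 2))"
  proof -
    have "(1 - fps_X^2) * fps_deriv (fps_deriv arcsin_fps)
        = fps_deriv (fps_deriv arcsin_fps) - fps_X^2 * fps_deriv (fps_deriv arcsin_fps)"
      by (simp add: algebra_simps)
    then show ?thesis
      by (simp add: fps_X_power_mult_nth del: fps_deriv_nth)
  qed
  consider "j = 0" | "j = 1" | i where "j = i + 2"
    by (metis add_2_eq_Suc' not0_implies_Suc One_nat_def)
  then show "((1 - fps_X^2) * fps_deriv (fps_deriv arcsin_fps)) $ j = (fps_X * fps_deriv arcsin_fps) $ j"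
  proof cases
    case 3
    have "arcsin_coeff (i + 4) = (real i + 2)^2 * arcsin_coeff (i + 2)"
      using arcsin_coeff_Suc_Suc_Suc[of "i + 1"] by (simp add: add.assoc algebra_simps)
    then show ?thesis
      unfolding lhs second using 3
      by (simp add: fps_deriv_arcsin_fps_nth fact_Suc numeral_eq_Suc field_simps
               del: of_nat_Suc fps_deriv_nth)
         (simp add: algebra_simps power2_eq_square)
  qed (simp_all add: lhs second fps_deriv_arcsin_fps_nth arcsin_coeff_def
                del: fps_deriv_nth)
qed

lemma arcsin_fps_deriv_squared: "(1 - fps_X^2) * (fps_deriv arcsin_fps)^2 = 1"
proof -
  let ?V = "(1 - fps_X^2) * (fps_deriv arcsin_fps)^2"
  have "fps_deriv ?V = - (2 * fps_X) * (fps_deriv arcsin_fps)^2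
          + 2 * fps_deriv arcsin_fps * ((1 - fps_X^2) * fps_deriv (fps_deriv arcsin_fps))"
    by (simp add: fps_deriv_power algebra_simps power2_eq_square)
  also have "\<dots> = 0"
    unfolding arcsin_fps_deriv_ode by (simp add: algebra_simps power2_eq_square)
  finally have "?V = fps_const (?V $ 0)"
    by (rule fps_deriv_eq_0_iff[THEN iffD1])
  also have "?V $ 0 = 1"
    by (simp add: fps_deriv_arcsin_fps_nth arcsin_coeff_def power2_eq_square
                  fps_X_power_mult_nth algebra_simps del: fps_deriv_nth)
  finally show ?thesis by simp
qed

lemma arcsin_fps_power_ode:
  "(1 - fps_X^2) * fps_deriv (fps_deriv (arcsin_fps^(q+2))) - fps_X * fps_deriv (arcsin_fps^(q+2))
     = of_nat ((q+2) * (q+1)) * arcsin_fps^q"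
proof -
  let ?Y = arcsin_fps and ?D = "fps_deriv arcsin_fps"
  have d1: "fps_deriv (?Y^(q+2)) = of_nat (q+2) * ?D * ?Y^(q+1)"
    by (subst fps_deriv_power') (simp del: power_Suc)
  have d2: "fps_deriv (?Y^(q+1)) = of_nat (q+1) * ?D * ?Y^q"
    by (subst fps_deriv_power') (simp del: power_Suc)
  have "fps_deriv (fps_deriv (?Y^(q+2)))
      = of_nat (q+2) * (fps_deriv ?D * ?Y^(q+1) + ?D * fps_deriv (?Y^(q+1)))"
    unfolding d1 by (simp add: algebra_simps del: power_Suc)
  also have "\<dots> = of_nat (q+2) * (fps_deriv ?D * ?Y^(q+1) + of_nat (q+1) * ?D^2 * ?Y^q)"
    unfolding d2 by (simp add: algebra_simps power2_eq_square del: power_Suc)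
  finally have d3: "fps_deriv (fps_deriv (?Y^(q+2))) = \<dots>" .
  have "(1 - fps_X^2) * fps_deriv (fps_deriv (?Y^(q+2)))
      = of_nat (q+2) * (((1 - fps_X^2) * fps_deriv ?D) * ?Y^(q+1)
                        + of_nat (q+1) * ((1 - fps_X^2) * ?D^2) * ?Y^q)"
    unfolding d3 by (simp add: algebra_simps del: power_Suc)
  also have "\<dots> = of_nat (q+2) * (fps_X * ?D * ?Y^(q+1) + of_nat (q+1) * ?Y^q)"
    unfolding arcsin_fps_deriv_ode arcsin_fps_deriv_squared by (simp del: power_Suc)
  finally have d4: "(1 - fps_X^2) * fps_deriv (fps_deriv (?Y^(q+2))) = \<dots>" .
  show ?thesis
    by (subst d4, subst d1) (simp add: algebra_simps del: power_Suc)
qed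

lemma arcsin_fps_power_nth_rec:
  "(real j + 1) * (real j + 2) * (arcsin_fps^(q+2)) $ (j+2)
     = (real j)^2 * (arcsin_fps^(q+2)) $ j + (real q + 1) * (real q + 2) * (arcsin_fps^q) $ j"
proof -
  let ?F = "arcsin_fps^(q+2)"
  have "((1 - fps_X^2) * fps_deriv (fps_deriv ?F) - fps_X * fps_deriv ?F) $ j
      = (of_nat ((q+2) * (q+1)) * arcsin_fps^q) $ j"
    by (simp only: arcsin_fps_power_ode)
  moreover have "(1 - fps_X^2) * fps_deriv (fps_deriv ?F)
               = fps_deriv (fps_deriv ?F) - fps_X^2 * fps_deriv (fps_deriv ?F)"
    by (simp add: algebra_simps)
  ultimately have ode_nth: "fps_deriv (fps_deriv ?F) $ j
      - (if j < 2 then 0 else fps_deriv (fps_deriv ?F) $ (j - 2))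
      - (if j = 0 then 0 else fps_deriv ?F $ (j - 1)) = real ((q+2) * (q+1)) * (arcsin_fps^q) $ j"
    by (simp only: fps_sub_nth fps_X_power_mult_nth fps_X_mult_nth fps_of_nat[symmetric]
                   fps_mult_left_const_nth)
  have shift2: "(if j < 2 then 0 else fps_deriv (fps_deriv ?F) $ (j - 2)) = (real j - 1) * real j * ?F $ j"
  proof (cases "j < 2")
    case False
    then have "j - 2 + 1 = j - 1" "j - 1 + 1 = j" by auto
    then show ?thesis using False by (simp add: of_nat_diff del: power_Suc)
  next
    case True
    then have "j = 0 \<or> j = 1" by auto
    then show ?thesis using True by auto
  qed
  have shift1: "(if j = 0 then 0 else fps_deriv ?F $ (j - 1)) = real j * ?F $ j"
    by (cases j) (auto simp del: power_Suc)
  have "fps_deriv (fps_deriv ?F) $ j = (real j + 1) * (real j + 2) * ?F $ (j + 2)"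
    by (simp add: algebra_simps del: power_Suc)
  with ode_nth show ?thesis
    unfolding shift2 shift1 by (simp add: algebra_simps power2_eq_square del: power_Suc)
qed

definition arcsin_power_coeff :: "nat \<Rightarrow> nat \<Rightarrow> real" where
  "arcsin_power_coeff j q = fact j / fact q * (arcsin_fps^q $ j)"

lemma arcsin_power_coeff_rec:
  "arcsin_power_coeff (j+2) (q+2) = (real j)^2 * arcsin_power_coeff j (q+2) + arcsin_power_coeff j q"
proof -
  have fact_j: "fact (j+2) = (real j + 1) * (real j + 2) * fact j"
    and fact_q: "fact (q+2) = (real q + 1) * (real q + 2) * fact q"
    by (simp_all add: fact_Suc numeral_eq_Suc algebra_simps)
  have "arcsin_power_coeff (j+2) (q+2)
      = fact j / fact (q+2) * ((real j + 1) * (real j + 2) * (arcsin_fps^(q+2)) $ (j+2))"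
    unfolding arcsin_power_coeff_def fact_j by (simp only: mult_ac divide_inverse)
  also have "\<dots> = fact j / fact (q+2) * ((real j)^2 * (arcsin_fps^(q+2)) $ j)
                  + fact j / fact (q+2) * ((real q + 1) * (real q + 2) * (arcsin_fps^q) $ j)"
    unfolding arcsin_fps_power_nth_rec by (simp only: distrib_left)
  also have "\<dots> = (real j)^2 * arcsin_power_coeff j (q+2) + arcsin_power_coeff j q"
  proof -
    have "\<And>x a b g :: real. a \<noteq> 0 \<Longrightarrow> b \<noteq> 0 \<Longrightarrow> x / (b * a) * (b * g) = x / a * g"
      by simp
    then have "fact j / fact (q+2) * ((real q + 1) * (real q + 2) * (arcsin_fps^q) $ j) = arcsin_power_coeff j q"
      unfolding arcsin_power_coeff_def fact_q by simp
    then show ?thesis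
      unfolding arcsin_power_coeff_def by (simp only: mult_ac)
  qed
  finally show ?thesis .
qed

lemma arcsin_power_coeff_diag: "arcsin_power_coeff q q = 1"
  unfolding arcsin_power_coeff_def
  by (simp add: startsby_zero_power_nth_same arcsin_fps_def arcsin_coeff_def)

lemma arcsin_power_coeff_1: "arcsin_power_coeff (2 * n + 1) 1 = (real (dfact (2 * n - 1)))^2"
  by (simp add: arcsin_power_coeff_def arcsin_fps_def arcsin_coeff_def)

lemma arcsin_power_coeff_eq_sym_falling_poly_step:
  fixes n q :: nat
  defines "c \<equiv> \<lambda>i. coeff (sym_falling_poly (2 * n + q + 1)) i"
  assumes high: "arcsin_power_coeff (2 * n + q + 2) (q + 2) = (-4)^n * c (q + 1)"
    and low: "q \<ge> 1 \<Longrightarrow> arcsin_power_coeff (2 * Suc n + q) q = (-4)^Suc n * c (q - 1)"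
  shows "arcsin_power_coeff (2 * Suc n + (q + 2)) (q + 2)
           = (-4)^Suc n * coeff (sym_falling_poly (Suc (Suc (2 * n + q + 1)))) (q + 1)"
proof -
  have low': "arcsin_power_coeff (2 * Suc n + q) q = (-4)^Suc n * (if q \<ge> 1 then c (q - 1) else 0)"
    using low by (cases "q = 0") (simp_all add: arcsin_power_coeff_def)
  have rec: "arcsin_power_coeff (2 * Suc n + (q + 2)) (q + 2)
      = (real (2 * n + q + 1) + 1)^2 * arcsin_power_coeff (2 * n + q + 2) (q + 2)
        + arcsin_power_coeff (2 * Suc n + q) q"
    using arcsin_power_coeff_rec[of "2 * n + q + 2" q] by (simp add: algebra_simps)
  have coeff: "coeff (sym_falling_poly (Suc (Suc (2 * n + q + 1)))) (q + 1)
      = (if q \<ge> 1 then c (q - 1) else 0) - (real (2 * n + q + 1) + 1)^2 / 4 * c (q + 1)"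
    unfolding coeff_sym_falling_poly_Suc_Suc c_def by simp
  show ?thesis
    unfolding rec coeff high low' by (simp add: field_simps)
qed

lemma arcsin_power_coeff_eq_sym_falling_poly:
  assumes "q \<ge> 1"
  shows "arcsin_power_coeff (2 * n + q) q = (-4)^n * coeff (sym_falling_poly (2 * n + q - 1)) (q - 1)"
  using assms
proof (induction n arbitrary: q)
  case 0
  then show ?case
    by (simp add: arcsin_power_coeff_diag coeff_sym_falling_poly_top)
next
  case (Suc n)
  show ?case
    using Suc.prems
  proof (induction q rule: less_induct)
    case (less q)
    have "q = 1 \<or> q = (q - 2) + 2"
      using less.prems by auto
    then consider "q = 1" | q' where "q = q' + 2"
      by blast
    then show ?case
    proof cases
      case 1
      then show ?thesis
        using arcsin_power_coeff_1[of "Suc n"] sym_falling_poly_even_coeff_0[of "Suc n"] by simp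
    next
      case 2
      have "arcsin_power_coeff (2 * Suc n + (q' + 2)) (q' + 2)
          = (-4)^Suc n * coeff (sym_falling_poly (Suc (Suc (2 * n + q' + 1)))) (q' + 1)"
        using Suc.IH[of "q' + 2"] less.IH[of q'] 2
        by (intro arcsin_power_coeff_eq_sym_falling_poly_step) (simp_all add: algebra_simps)
      moreover have "2 * Suc n + q - 1 = Suc (Suc (2 * n + q' + 1))"
        using 2 by simp
      ultimately show ?thesis
        using 2 by (simp del: sym_falling_poly.simps(3))
    qed
  qed
qed

lemma arcsin_fps_power_nth:
  assumes "q \<ge> 1"
  shows "(arcsin_fps ^ q) $ (2 * n + q) = fact q / fact (2 * n + q) * ((-4)^n * Qfun q (2 * n) 2)"
  using arcsin_power_coeff_eq_sym_falling_poly[OF assms, of n] Qfun_eq_coeff_sym_falling_poly[OF assms, of n]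
  by (simp add: arcsin_power_coeff_def add.commute field_simps)

(* The sequence x_i of the theorem: x_i / i! is the coefficient of t^i in arcsin t / t - 1. *)
definition arcsin_quotient_coeff :: "nat \<Rightarrow> real" where
  "arcsin_quotient_coeff i = (1 + (-1) ^ i) / 2 * (real (dfact (i - 1)))\<^sup>2 / real (i + 1)"

lemma fps_X_mult_arcsin_quotient:
  "fps_X * Abs_fps (\<lambda>i. if i = 0 then 0 else arcsin_quotient_coeff i / fact i) = arcsin_fps - fps_X"
proof (rule fps_ext)
  fix j
  have "j = 0 \<or> j = 1 \<or> j = Suc (j - 1) \<and> j - 1 \<ge> 1"
    by auto
  then consider "j = 0" | "j = 1" | i where "j = Suc i" "i \<ge> 1"
    by blast
  then show "(fps_X * Abs_fps (\<lambda>i. if i = 0 then 0 else arcsin_quotient_coeff i / fact i)) $ j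
               = (arcsin_fps - fps_X) $ j"
  proof cases
    case 3
    then show ?thesis
      by (cases "even i")
         (simp_all add: arcsin_fps_def arcsin_coeff_def arcsin_quotient_coeff_def fact_Suc field_simps
                   del: of_nat_Suc)
  qed (simp_all add: arcsin_fps_def arcsin_coeff_def)
qed

lemma bell_partial_arcsin_quotient_coeff:
  assumes "k \<le> N"
  shows "bell_partial N k arcsin_quotient_coeff
           = fact N / fact k * (\<Sum>q\<le>k. real (k choose q) * (-1)^(k - q) * (arcsin_fps^q) $ (N + q))"
proof -
  let ?Z = "Abs_fps (\<lambda>i. if i = 0 then 0 else arcsin_quotient_coeff i / fact i)"
  have "(?Z ^ k) $ N = ((fps_X * ?Z) ^ k) $ (N + k)"
    by (simp add: power_mult_distrib fps_X_power_mult_nth)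
  also have "\<dots> = (\<Sum>q\<le>k. (of_nat (k choose q) * arcsin_fps ^ q * (- fps_X) ^ (k - q)) $ (N + k))"
    unfolding fps_X_mult_arcsin_quotient diff_conv_add_uminus binomial_ring fps_sum_nth ..
  also have "\<dots> = (\<Sum>q\<le>k. real (k choose q) * (-1)^(k - q) * (arcsin_fps^q) $ (N + q))"
  proof (intro sum.cong refl)
    fix q assume "q \<in> {..k}"
    then have "N + k - (k - q) = N + q" "\<not> N + k < k - q" by auto
    moreover have "of_nat (k choose q) * arcsin_fps ^ q * (- fps_X) ^ (k - q)
        = (-1)^(k - q) * (fps_const (real (k choose q)) * (arcsin_fps ^ q * fps_X ^ (k - q)))"
      by (simp only: power_minus[of "fps_X :: real fps"] fps_of_nat mult_ac)
    ultimately show "(of_nat (k choose q) * arcsin_fps ^ q * (- fps_X) ^ (k - q)) $ (N + k)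
        = real (k choose q) * (-1)^(k - q) * (arcsin_fps^q) $ (N + q)"
      by (simp add: minus_one_power_iff fps_X_power_mult_right_nth)
  qed
  finally show ?thesis
    using bell_partial_eq_fps_power_nth[OF assms, of arcsin_quotient_coeff] by simp
qed

lemma choose_div_fact_shift:
  assumes "q \<le> k"
  shows "real (k choose q) * fact q / (fact k * fact (m + q)) = real ((m + k) choose (k - q)) / fact (m + k)"
proof -
  have "m + k - (k - q) = m + q" using assms by simp
  then show ?thesis
    using assms by (simp add: binomial_fact field_simps)
qed

lemma summand_rearrange:
  fixes Q :: real
  assumes "q \<le> k"
  shows "fact (2 * n) / fact k * (real (k choose q) * (-1)^(k - q) * (fact q / fact (2 * n + q) * ((-4)^n * Q)))
       = (-1) ^ (n + k) * real (dfact (4 * n)) / fact (2 * n + k)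
         * ((-1) ^ q * real ((2 * n + k) choose (k - q)) * Q)"
proof -
  have sign: "(-1::real)^(k - q) * (-4)^n = (-1)^(n + k) * (-1)^q * 2^(2 * n)"
  proof -
    have "(-1::real)^(k - q) = (-1)^k * (-1)^q"
      using assms neg_one_power_add_eq_neg_one_power_diff[of q k, where 'a = real] by (simp add: power_add)
    moreover have "(-4::real)^n = (-1)^n * 2^(2 * n)"
      by (simp add: power_mult power_mult_distrib[symmetric])
    ultimately show ?thesis
      by (simp add: power_add mult_ac)
  qed
  have "fact (2 * n) / fact k * (real (k choose q) * (-1)^(k - q) * (fact q / fact (2 * n + q) * ((-4)^n * Q)))
      = fact (2 * n) * (real (k choose q) * fact q / (fact k * fact (2 * n + q))) * ((-1)^(k - q) * (-4)^n) * Q"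
    by (simp add: field_simps)
  also have "\<dots> = fact (2 * n) * (real ((2 * n + k) choose (k - q)) / fact (2 * n + k))
        * ((-1)^(n + k) * (-1)^q * 2^(2 * n)) * Q"
    by (simp only: choose_div_fact_shift[OF assms] sign)
  also have "\<dots> = (-1) ^ (n + k) * real (dfact (4 * n)) / fact (2 * n + k)
        * ((-1) ^ q * real ((2 * n + k) choose (k - q)) * Q)"
    using dfact_even[of "2 * n"] by (simp add: field_simps)
  finally show ?thesis .
qed

theorem theorem3p1:
  fixes k n :: nat
  assumes "k \<ge> 1" and "n \<ge> 1" and "2 * n \<ge> k"
  shows "bell_partial (2 * n) k
           (\<lambda>i. (1 + (-1) ^ i) / 2 * (real (dfact (i - 1)))\<^sup>2 / real (i + 1))
         = (-1) ^ (n + k) * real (dfact (4 * n)) / fact (2 * n + k)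
           * (\<Sum>q=1..k. (-1) ^ q * real ((2 * n + k) choose (k - q)) * Qfun q (2 * n) 2)"
proof -
  have x: "(\<lambda>i. (1 + (-1) ^ i) / 2 * (real (dfact (i - 1)))\<^sup>2 / real (i + 1)) = arcsin_quotient_coeff"
    by (simp add: fun_eq_iff arcsin_quotient_coeff_def)
  have "{..k} = insert 0 {1..k}" by auto
  then have "bell_partial (2 * n) k arcsin_quotient_coeff
      = fact (2 * n) / fact k * (\<Sum>q=1..k. real (k choose q) * (-1)^(k - q)
          * (fact q / fact (2 * n + q) * ((-4)^n * Qfun q (2 * n) 2)))"
    using assms by (simp add: bell_partial_arcsin_quotient_coeff arcsin_fps_power_nth)
  also have "\<dots> = (-1) ^ (n + k) * real (dfact (4 * n)) / fact (2 * n + k)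
           * (\<Sum>q=1..k. (-1) ^ q * real ((2 * n + k) choose (k - q)) * Qfun q (2 * n) 2)"
    unfolding sum_distrib_left by (intro sum.cong refl summand_rearrange) simp
  finally show ?thesis
    unfolding x .
qed

end
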